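(* In the idealized setting described in the context, for the PAIR framework one has $\ell_k\ge 2\ell_{k-1}$ for every iteration $k\ge 1$.
   Context: Setting: a goal-conditioned Markov decision process with finite state space $\mathcal S$, finite action set $\mathcal A$, deterministic transitions, goal space $\mathcal G=\mathcal S$, and sparse reward $r(s,a,g)=\mathbb I\{s=g\}$. A policy is $\pi(a|s,g)$. Write $s\xrightarrow{\pi} g$ if, starting at $s_0=s$ and choosing $a_i\sim\pi(\cdot|s_i,g)$, $s_{i+1}\sim P(\cdot|s_i,a_i)$, the goal $g$ is reached ($s_t=g$ for some $t\ge 0$) with probability $1$. Let $d(s,s')$ be the minimum $t$ such that some policy reaches $s_t=s'$ from $s_0=s$ with probability $1$ ($+\infty$ if none). Let $\pi^{(k)}$ be the policy at the end of iteration $k$ ($\pi^{(0)}$ the initial policy) and $\ell_k=\sup\{\ell:\ s\xrightarrow{\pi^{(k)}} g \text{ for all } s,g \text{ with } d(s,g)\le \ell\}$. Assumptions: if $P(s'|s,a)=1$ then $\pi^{(0)}(a|s,g=s')=1$. In each iteration every state-goal pair $(s,g)$ is sampled at least once. Idealized PAIR iteration $k$: for each pair $(s,g)$, roll out $\pi^{(k-1)}$ from $s$ toward $g$; if it succeeds the trajectory is added to the dataset; otherwise task reduction selects a subgoal $s'$ maximizing $V(s,s')\cdot V(s',g)$, where $V$ is the goal-conditioned value function (equal to $1$ exactly on pairs $(x,y)$ with $x\xrightarrow{\pi^{(k-1)}}y$), executes $\pi^{(k-1)}(\cdot|\cdot,s')$ from $s$ and then $\pi^{(k-1)}(\cdot|\cdot,g)$,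 and adds the resulting successful trajectory from $s$ to $g$ if any. The supervised learning step then produces $\pi^{(k)}$ with $s\xrightarrow{\pi^{(k)}}g$ for every pair $(s,g)$ for which the dataset contains a successful trajectory from $s$ to $g$. *)

theory Defs
  imports "HOL-Probability.Probability_Mass_Function" "HOL-Library.Extended_Nat"
begin

text \<open>Deterministic goal-conditioned MDP: finite state type 's, finite action type 'a,
  transition function step s a (P(s'|s,a) = 1 iff s' = step s a).\<close>

fun reach_prob :: "('s \<Rightarrow> 'a::finite \<Rightarrow> 's) \<Rightarrow> ('s \<Rightarrow> 's \<Rightarrow> 'a pmf) \<Rightarrow> 's \<Rightarrow> nat \<Rightarrow> 's \<Rightarrow> real"
where
  "reach_prob step pol g 0 s = (if s = g then 1 else 0)"
| "reach_prob step pol g (Suc n) s =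
     (if s = g then 1 else (\<Sum>a\<in>UNIV. pmf (pol s g) a * reach_prob step pol g n (step s a)))"

definition reaches :: "('s \<Rightarrow> 'a::finite \<Rightarrow> 's) \<Rightarrow> ('s \<Rightarrow> 's \<Rightarrow> 'a pmf) \<Rightarrow> 's \<Rightarrow> 's \<Rightarrow> bool"
where
  "reaches step pol s g \<longleftrightarrow> (\<lambda>n. reach_prob step pol g n s) \<longlonglongrightarrow> 1"

fun state_prob :: "('s \<Rightarrow> 'a::finite \<Rightarrow> 's) \<Rightarrow> ('s \<Rightarrow> 'a pmf) \<Rightarrow> nat \<Rightarrow> 's \<Rightarrow> 's \<Rightarrow> real"
where
  "state_prob step p 0 s x = (if s = x then 1 else 0)"
| "state_prob step p (Suc t) s x = (\<Sum>a\<in>UNIV. pmf (p s) a * state_prob step p t (step s a) x)"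

definition dist_mdp :: "('s \<Rightarrow> 'a::finite \<Rightarrow> 's) \<Rightarrow> 's \<Rightarrow> 's \<Rightarrow> enat"
where
  "dist_mdp step s s' = Inf {enat t | t. \<exists>p. state_prob step p t s s' = 1}"

definition ell :: "('s \<Rightarrow> 'a::finite \<Rightarrow> 's) \<Rightarrow> ('s \<Rightarrow> 's \<Rightarrow> 'a pmf) \<Rightarrow> enat"
where
  "ell step pol = Sup {enat l | l. \<forall>s g. dist_mdp step s g \<le> enat l \<longrightarrow> reaches step pol s g}"

text \<open>Task-reduction execution: from s follow pol(.|.,s') until s' is reached, then
  follow pol(.|.,g); success as soon as g is visited.  Probability of success within n steps.\<close>
fun comp_prob :: "('s \<Rightarrow> 'a::finite \<Rightarrow> 's) \<Rightarrow> ('s \<Rightarrow> 's \<Rightarrow> 'a pmf) \<Rightarrow> 's \<Rightarrow> 's \<Rightarrow> nat \<Rightarrow> 's \<Rightarrow> real"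
where
  "comp_prob step pol s' g 0 x =
     (if x = g then 1 else if x = s' then reach_prob step pol g 0 x else 0)"
| "comp_prob step pol s' g (Suc n) x =
     (if x = g then 1 else if x = s' then reach_prob step pol g (Suc n) x
      else (\<Sum>a\<in>UNIV. pmf (pol x s') a * comp_prob step pol s' g n (step x a)))"

definition comp_reaches :: "('s \<Rightarrow> 'a::finite \<Rightarrow> 's) \<Rightarrow> ('s \<Rightarrow> 's \<Rightarrow> 'a pmf) \<Rightarrow> 's \<Rightarrow> 's \<Rightarrow> 's \<Rightarrow> bool"
where
  "comp_reaches step pol s s' g \<longleftrightarrow> (\<lambda>n. comp_prob step pol s' g n s) \<longlonglongrightarrow> 1"

end

theory Submission
  imports Defs
begin

text \<open>Suppose the old policy solves every pair at distance at most l, and let (s, g) be at distance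
  at most 2l. Splitting a path of length at most 2l from s to g in the middle gives a state z with both halves
  at distance at most l, so V(s,z) V(z,g) = 1. Values lie in [0, 1], hence the maximising subgoal m
  also satisfies V(s,m) = V(m,g) = 1: the old policy reaches m from s and g from m with probability 1,
  so the task-reduction rollout through m succeeds with probability 1 and the new policy solves (s, g).\<close>

lemma pmf_weighted_sum_bounded:
  fixes p :: "'a::finite pmf"
  assumes "\<And>a. 0 \<le> f a \<and> f a \<le> 1"
  shows "0 \<le> (\<Sum>a\<in>UNIV. pmf p a * f a) \<and> (\<Sum>a\<in>UNIV. pmf p a * f a) \<le> 1"
proof
  show "0 \<le> (\<Sum>a\<in>UNIV. pmf p a * f a)"
    using assms by (simp add: sum_nonneg)
  have "(\<Sum>a\<in>UNIV. pmf p a * f a) \<le> (\<Sum>a\<in>UNIV. pmf p a)"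
    using assms by (intro sum_mono mult_left_le) auto
  also have "\<dots> = 1"
    by (rule sum_pmf_eq_1) auto
  finally show "(\<Sum>a\<in>UNIV. pmf p a * f a) \<le> 1" .
qed

lemma reach_prob_bounded: "0 \<le> reach_prob step pol g n s \<and> reach_prob step pol g n s \<le> 1"
  by (induction n arbitrary: s) (simp_all add: pmf_weighted_sum_bounded)

lemma reach_prob_le_Suc: "reach_prob step pol g n s \<le> reach_prob step pol g (Suc n) s"
proof (induction n arbitrary: s)
  case 0
  then show ?case
    using reach_prob_bounded[of step pol g 0] by (simp add: sum_nonneg)
next
  case (Suc n)
  then show ?case
    unfolding reach_prob.simps(2)[of _ _ _ "Suc n"]
    by (auto intro!: sum_mono mult_left_mono)
qed

lemma reach_prob_mono: "m \<le> n \<Longrightarrow> reach_prob step pol g m s \<le> reach_prob step pol g n s"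
  by (rule lift_Suc_mono_le[where f = "\<lambda>n. reach_prob step pol g n s"]) (rule reach_prob_le_Suc)

lemma comp_prob_bounded: "0 \<le> comp_prob step pol s' g n s \<and> comp_prob step pol s' g n s \<le> 1"
  by (induction n arbitrary: s)
    (simp_all add: pmf_weighted_sum_bounded reach_prob_bounded del: reach_prob.simps)

lemma comp_prob_at_goal: "comp_prob step pol s' g n g = 1"
  by (cases n) simp_all

lemma comp_prob_at_subgoal: "s' \<noteq> g \<Longrightarrow> comp_prob step pol s' g n s' = reach_prob step pol g n s'"
  by (cases n) (simp_all del: reach_prob.simps)

lemma reach_prob_mult_le_comp_prob:
  "reach_prob step pol s' n x * reach_prob step pol g m s' \<le> comp_prob step pol s' g (n + m) x"
proof (induction n arbitrary: x)
  case 0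
  then show ?case
    using comp_prob_bounded[of step pol s' g m x] comp_prob_at_goal[of step pol s' g m]
      reach_prob_bounded[of step pol g m s'] comp_prob_at_subgoal[of s' g step pol m]
    by (cases "s' = g") auto
next
  case (Suc n)
  consider "x = g" | "x = s'" "x \<noteq> g" | "x \<noteq> g" "x \<noteq> s'"
    by blast
  then show ?case
  proof cases
    case 1
    then show ?thesis
      using reach_prob_bounded[of step pol s' "Suc n" x] reach_prob_bounded[of step pol g m s']
      by (simp add: comp_prob_at_goal mult_le_one del: reach_prob.simps)
  next
    case 2
    have "reach_prob step pol s' (Suc n) x * reach_prob step pol g m s' \<le> reach_prob step pol g m s'"
      using reach_prob_bounded[of step pol s' "Suc n" x] reach_prob_bounded[of step pol g m s']
      by (intro mult_left_le_one_le) auto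
    also have "\<dots> \<le> reach_prob step pol g (Suc n + m) s'"
      by (rule reach_prob_mono) simp
    finally show ?thesis
      using 2 comp_prob_at_subgoal[of s' g step pol "Suc n + m"] by simp
  next
    case 3
    have "reach_prob step pol s' (Suc n) x * reach_prob step pol g m s'
       = (\<Sum>a\<in>UNIV. pmf (pol x s') a * (reach_prob step pol s' n (step x a) * reach_prob step pol g m s'))"
      using 3 by (simp add: sum_distrib_right mult.assoc)
    also have "\<dots> \<le> (\<Sum>a\<in>UNIV. pmf (pol x s') a * comp_prob step pol s' g (n + m) (step x a))"
      by (intro sum_mono mult_left_mono Suc.IH) simp
    also have "\<dots> = comp_prob step pol s' g (Suc n + m) x"
      using 3 by simp
    finally show ?thesis .
  qed
qed

lemma comp_reaches_if_reaches:
  assumes "reaches step pol s s'" "reaches step pol s' g"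
  shows "comp_reaches step pol s s' g"
proof -
  let ?lower = "\<lambda>n. reach_prob step pol s' (n div 2) s * reach_prob step pol g (n - n div 2) s'"
  have half: "filterlim (\<lambda>n::nat. n div 2) at_top at_top"
    by (rule filterlim_at_top_div_const_nat) simp
  have other_half: "filterlim (\<lambda>n::nat. n - n div 2) at_top at_top"
    by (rule filterlim_at_top_mono[OF half]) (intro always_eventually allI, presburger)
  have "?lower \<longlonglongrightarrow> 1 * 1"
    using assms unfolding reaches_def
    by (intro tendsto_mult filterlim_compose[OF _ half] filterlim_compose[OF _ other_half])
  then have lower_lim: "?lower \<longlonglongrightarrow> 1"
    by simp
  have lower_le: "?lower n \<le> comp_prob step pol s' g n s" for n
    using reach_prob_mult_le_comp_prob[of step pol s' "n div 2" s g "n - n div 2"] by simp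
  show ?thesis
    unfolding comp_reaches_def
  proof (rule tendsto_sandwich[OF _ _ lower_lim tendsto_const])
    show "\<forall>\<^sub>F n in sequentially. ?lower n \<le> comp_prob step pol s' g n s"
      using lower_le by simp
    show "\<forall>\<^sub>F n in sequentially. comp_prob step pol s' g n s \<le> 1"
      by (simp add: comp_prob_bounded)
  qed
qed

definition step_rel :: "('s \<Rightarrow> 'a \<Rightarrow> 's) \<Rightarrow> 's rel" where
  "step_rel step = {(x, step x a) | x a. True}"

lemma relpow_step_rel_if_state_prob_pos:
  "0 < state_prob step p t s g \<Longrightarrow> (s, g) \<in> step_rel step ^^ t"
proof (induction t arbitrary: s)
  case 0
  then show ?case by (simp split: if_splits)
next
  case (Suc t)
  have "\<exists>a. 0 < state_prob step p t (step s a) g"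
  proof (rule ccontr)
    assume "\<nexists>a. 0 < state_prob step p t (step s a) g"
    then have "(\<Sum>a\<in>UNIV. pmf (p s) a * state_prob step p t (step s a) g) \<le> 0"
      by (intro sum_nonpos mult_nonneg_nonpos) (auto simp: not_less)
    with Suc.prems show False by simp
  qed
  then obtain a where "(step s a, g) \<in> step_rel step ^^ t"
    using Suc.IH by blast
  then show ?case
    by (rule relpow_Suc_I2[rotated]) (auto simp: step_rel_def)
qed

text \<open>A path may revisit states, so a stationary policy cannot simply follow it; instead the
  greedy policy moves to a successor whose graph distance to g is one smaller.\<close>
lemma dist_mdp_le_if_relpow_step_rel:
  assumes "(s, g) \<in> step_rel step ^^ t"
  shows "dist_mdp step s g \<le> enat t"
proof -
  let ?R = "step_rel step"
  define h where "h y = (LEAST n. (y, g) \<in> ?R ^^ n)" for y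
  have h_path: "(y, g) \<in> ?R ^^ h y" if "(y, g) \<in> ?R ^^ n" for y n
    unfolding h_def using that by (rule LeastI)
  have h_le: "h y \<le> n" if "(y, g) \<in> ?R ^^ n" for y n
    unfolding h_def using that by (rule Least_le)
  have descent: "\<exists>a. (step y a, g) \<in> ?R ^^ n \<and> h (step y a) = n"
    if "(y, g) \<in> ?R ^^ Suc n" "h y = Suc n" for y n
  proof -
    from that(1) obtain z where "(y, z) \<in> ?R" "(z, g) \<in> ?R ^^ n"
      by (rule relpow_Suc_E2)
    then obtain a where path: "(step y a, g) \<in> ?R ^^ n"
      by (auto simp: step_rel_def)
    have detour: "(y, g) \<in> ?R ^^ Suc (h (step y a))"
      using h_path[OF path] by (rule relpow_Suc_I2[rotated]) (auto simp: step_rel_def)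
    have "Suc n \<le> Suc (h (step y a))"
      using h_le[OF detour] that(2) by simp
    then show ?thesis
      using path h_le[OF path] by auto
  qed
  define p where
    "p y = return_pmf (SOME a. (step y a, g) \<in> ?R ^^ (h y - 1) \<and> h (step y a) = h y - 1)" for y
  have "state_prob step p n y g = 1" if "(y, g) \<in> ?R ^^ n" "h y = n" for n y
    using that
  proof (induction n arbitrary: y)
    case 0
    then show ?case by simp
  next
    case (Suc n)
    let ?a = "SOME a. (step y a, g) \<in> ?R ^^ n \<and> h (step y a) = n"
    have greedy: "(step y ?a, g) \<in> ?R ^^ n \<and> h (step y ?a) = n"
      using descent[OF Suc.prems] by (rule someI_ex)
    have "state_prob step p n (step y ?a) g = 1"
      using greedy by (intro Suc.IH) auto
    moreover have "p y = return_pmf ?a"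
      using Suc.prems(2) by (simp add: p_def)
    ultimately show ?case
      by (simp add: pmf_return indicator_def)
  qed
  from this[OF h_path[OF assms] refl] have "state_prob step p (h s) s g = 1" .
  then have "dist_mdp step s g \<le> enat (h s)"
    unfolding dist_mdp_def by (intro Inf_lower) blast
  also have "\<dots> \<le> enat t"
    using h_le[OF assms] by simp
  finally show ?thesis .
qed

lemma dist_mdp_le_iff_relpow_step_rel:
  "dist_mdp step s g \<le> enat n \<longleftrightarrow> (\<exists>t\<le>n. (s, g) \<in> step_rel step ^^ t)"
proof
  assume "dist_mdp step s g \<le> enat n"
  then have "Inf {enat t | t. \<exists>p. state_prob step p t s g = 1} < enat (Suc n)"
    unfolding dist_mdp_def by (rule le_less_trans) simp
  then obtain t p where "t \<le> n" "state_prob step p t s g = 1"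
    by (auto simp: Inf_less_iff less_Suc_eq_le)
  then show "\<exists>t\<le>n. (s, g) \<in> step_rel step ^^ t"
    using relpow_step_rel_if_state_prob_pos[of step p t s g] by auto
next
  assume "\<exists>t\<le>n. (s, g) \<in> step_rel step ^^ t"
  then obtain t where "t \<le> n" "(s, g) \<in> step_rel step ^^ t"
    by blast
  then have "dist_mdp step s g \<le> enat t"
    by (intro dist_mdp_le_if_relpow_step_rel)
  also have "\<dots> \<le> enat n"
    using \<open>t \<le> n\<close> by simp
  finally show "dist_mdp step s g \<le> enat n" .
qed

lemma dist_mdp_midpoint:
  assumes "dist_mdp step s g \<le> enat (2 * l)"
  obtains z where "dist_mdp step s z \<le> enat l" "dist_mdp step z g \<le> enat l"
proof -
  obtain t where t: "t \<le> 2 * l" "(s, g) \<in> step_rel step ^^ (min t l + (t - min t l))"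
    using assms by (auto simp: dist_mdp_le_iff_relpow_step_rel)
  then obtain z where "(s, z) \<in> step_rel step ^^ min t l" "(z, g) \<in> step_rel step ^^ (t - min t l)"
    unfolding relpow_add by blast
  moreover have "min t l \<le> l" "t - min t l \<le> l"
    using t(1) by auto
  ultimately show thesis
    by (intro that; unfold dist_mdp_le_iff_relpow_step_rel; blast)
qed

lemma Sup_enat_double_le:
  assumes "\<And>l. P l \<Longrightarrow> Q (2 * l)"
  shows "2 * Sup {enat l | l. P l} \<le> Sup {enat l | l. Q l}"
  unfolding le_Sup_iff
proof (intro allI impI)
  fix y assume y: "y < 2 * Sup {enat l | l. P l}"
  then obtain m where m: "y = enat m"
    by (cases y) auto
  have "enat (m div 2) < Sup {enat l | l. P l}"
  proof (rule ccontr)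
    assume "\<not> enat (m div 2) < Sup {enat l | l. P l}"
    then have "2 * Sup {enat l | l. P l} \<le> 2 * enat (m div 2)"
      by (intro mult_left_mono) auto
    also have "\<dots> \<le> y"
      using m by (simp add: numeral_eq_enat)
    finally show False
      using y by simp
  qed
  then obtain l where "P l" "m div 2 < l"
    by (auto simp: less_Sup_iff)
  then show "\<exists>b\<in>{enat l | l. Q l}. y < b"
    using assms m by (intro bexI[of _ "enat (2 * l)"]) auto
qed

lemma unit_interval_mult_ge_1:
  fixes x y :: real
  assumes "0 \<le> x" "x \<le> 1" "0 \<le> y" "y \<le> 1" "1 \<le> x * y"
  shows "x = 1 \<and> y = 1"
proof -
  have "x * y \<le> x" "x * y \<le> y"
    using assms by (simp_all add: mult_left_le mult_left_le_one_le)
  then show ?thesis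
    using assms by linarith
qed

theorem lemmaA1:
  fixes step :: "'s::finite \<Rightarrow> 'a::finite \<Rightarrow> 's"
    and pol :: "nat \<Rightarrow> 's \<Rightarrow> 's \<Rightarrow> 'a pmf"
    and V :: "nat \<Rightarrow> 's \<Rightarrow> 's \<Rightarrow> real"
    and sub :: "nat \<Rightarrow> 's \<Rightarrow> 's \<Rightarrow> 's"
    and k :: nat
  assumes init: "\<forall>s a. pmf (pol 0 s (step s a)) a = 1"
    and V_range: "\<forall>j\<ge>1. \<forall>x y. 0 \<le> V j x y \<and> V j x y \<le> 1"
    and V_one: "\<forall>j\<ge>1. \<forall>x y. V j x y = 1 \<longleftrightarrow> reaches step (pol (j - 1)) x y"
    and sub_max: "\<forall>j\<ge>1. \<forall>s g s''.
                    V j s s'' * V j s'' g \<le> V j s (sub j s g) * V j (sub j s g) g"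
    and learn_direct: "\<forall>j\<ge>1. \<forall>s g. reaches step (pol (j - 1)) s g \<longrightarrow> reaches step (pol j) s g"
    and learn_reduce: "\<forall>j\<ge>1. \<forall>s g. \<not> reaches step (pol (j - 1)) s g
                         \<and> comp_reaches step (pol (j - 1)) s (sub j s g) g
                         \<longrightarrow> reaches step (pol j) s g"
    and k: "k \<ge> 1"
  shows "ell step (pol k) \<ge> 2 * ell step (pol (k - 1))"
proof -
  \<comment> \<open>The hypothesis init only guarantees that ell starts positive; the doubling step ignores it.\<close>
  let ?old = "pol (k - 1)"
  have V_k_one: "V k x y = 1 \<longleftrightarrow> reaches step ?old x y" for x y
    using V_one k by blast
  have V_k_range: "0 \<le> V k x y \<and> V k x y \<le> 1" for x y
    using V_range k by blast
  have doubling: "reaches step (pol k) s g"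
    if solved: "\<forall>s g. dist_mdp step s g \<le> enat l \<longrightarrow> reaches step ?old s g"
      and near: "dist_mdp step s g \<le> enat (2 * l)" for l s g
  proof -
    let ?m = "sub k s g"
    obtain z where "dist_mdp step s z \<le> enat l" "dist_mdp step z g \<le> enat l"
      using near by (rule dist_mdp_midpoint)
    then have "V k s z = 1" "V k z g = 1"
      using solved V_k_one by blast+
    moreover have "V k s z * V k z g \<le> V k s ?m * V k ?m g"
      using sub_max k by blast
    ultimately have "1 \<le> V k s ?m * V k ?m g"
      by simp
    then have "V k s ?m = 1 \<and> V k ?m g = 1"
      using V_k_range by (intro unit_interval_mult_ge_1) auto
    then have "comp_reaches step ?old s ?m g"
      by (intro comp_reaches_if_reaches) (simp_all add: V_k_one)
    then show ?thesis
      using learn_direct learn_reduce k by blast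
  qed
  show ?thesis
    unfolding ell_def by (rule Sup_enat_double_le) (use doubling in blast)
qed

end
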